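(* Let $\mathcal H$ be a separable complex Hilbert space with canonical orthonormal basis $\{e_n\}$ and $S_2$ the Hilbert–Schmidt operators with $\langle\eta,\tau\rangle_2=\operatorname{tr}(\eta^*\tau)$. For a non-negative operator $A\in\mathcal B(S_2)$ there exists a family of selfadjoint operators $\{a_{nm}\}_{n,m\in\mathbb N}\subset\mathcal B(\mathcal H)$ such that $$A\eta=\sum_{n,m}\hat\varepsilon_{nm}\eta\,a_{nm},\qquad \eta\in S_2,$$ where $a_{nn}\ge0$ for all $n$. Moreover, the $a_{nn}$ are positive (resp. positive definite) if $A$ is positive (resp. positive definite), with greatest lower bounds $m_{a_{nn}}\ge m_A$ for all $n\in\mathbb N$.
   Context: $\varepsilon_{nm}=|e_n\rangle\langle e_m|$ (so $\varepsilon_{nm}f=\langle e_m,f\rangle e_n$) and $\hat\varepsilon_{nm}=\frac{1+i}{2}\varepsilon_{nm}+\frac{1-i}{2}\varepsilon_{mn}$ (selfadjoint; $\hat\varepsilon_{nn}=\varepsilon_{nn}$). Inner products are anti-linear in the left argument. For a selfadjoint bounded operator $T$ on a Hilbert space, $m_T=\inf\{\langle x,Tx\rangle:\|x\|=1\}$ is its greatest lower bound; $T\ge0$ if $\langle x,Tx\rangle\ge 0$ for all $x$, positive if $\langle x,Tx\rangle>0$ for $x\ne0$, positive definite if $m_T>0$. *)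

theory Defs
  imports "HOL-Analysis.Analysis"
begin

text \<open>The separable Hilbert space H is realised concretely as l2(nat) of complex
sequences, with canonical orthonormal basis e n.  Bounded operators on H are
functions on sequences that are bounded linear on l2 and (canonical
representative) vanish outside l2, so equality of operators is plain equality.\<close>

definition ell2 :: "(nat \<Rightarrow> complex) set" where
  "ell2 = {x. summable (\<lambda>n. (cmod (x n))\<^sup>2)}"

definition l2inner :: "(nat \<Rightarrow> complex) \<Rightarrow> (nat \<Rightarrow> complex) \<Rightarrow> complex" where
  "l2inner x y = (\<Sum>n. cnj (x n) * y n)"

definition l2norm :: "(nat \<Rightarrow> complex) \<Rightarrow> real" where
  "l2norm x = sqrt (\<Sum>n. (cmod (x n))\<^sup>2)"

definition basis_e :: "nat \<Rightarrow> (nat \<Rightarrow> complex)" where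
  "basis_e n = (\<lambda>k. if k = n then 1 else 0)"

type_synonym hop = "(nat \<Rightarrow> complex) \<Rightarrow> (nat \<Rightarrow> complex)"

definition bounded_op :: "hop \<Rightarrow> bool" where
  "bounded_op T \<longleftrightarrow>
     (\<forall>x. x \<notin> ell2 \<longrightarrow> T x = (\<lambda>_. 0)) \<and>
     (\<forall>x\<in>ell2. T x \<in> ell2) \<and>
     (\<forall>x\<in>ell2. \<forall>y\<in>ell2. T (\<lambda>k. x k + y k) = (\<lambda>k. T x k + T y k)) \<and>
     (\<forall>x\<in>ell2. \<forall>c. T (\<lambda>k. c * x k) = (\<lambda>k. c * T x k)) \<and>
     (\<exists>C. \<forall>x\<in>ell2. l2norm (T x) \<le> C * l2norm x)"

definition selfadjoint_op :: "hop \<Rightarrow> bool" where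
  "selfadjoint_op T \<longleftrightarrow> (\<forall>x\<in>ell2. \<forall>y\<in>ell2. l2inner x (T y) = l2inner (T x) y)"

definition nonneg_op :: "hop \<Rightarrow> bool" where
  "nonneg_op T \<longleftrightarrow> (\<forall>x\<in>ell2. Im (l2inner x (T x)) = 0 \<and> 0 \<le> Re (l2inner x (T x)))"

definition positive_op :: "hop \<Rightarrow> bool" where
  "positive_op T \<longleftrightarrow> (\<forall>x\<in>ell2. x \<noteq> (\<lambda>_. 0) \<longrightarrow>
      Im (l2inner x (T x)) = 0 \<and> 0 < Re (l2inner x (T x)))"

definition glb_op :: "hop \<Rightarrow> real" where
  "glb_op T = Inf ((\<lambda>x. Re (l2inner x (T x))) ` {x \<in> ell2. l2norm x = 1})"

definition posdef_op :: "hop \<Rightarrow> bool" where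
  "posdef_op T \<longleftrightarrow> glb_op T > 0"

definition eps :: "nat \<Rightarrow> nat \<Rightarrow> hop" where
  "eps n m x = (if x \<in> ell2 then (\<lambda>k. l2inner (basis_e m) x * basis_e n k) else (\<lambda>_. 0))"

definition epshat :: "nat \<Rightarrow> nat \<Rightarrow> hop" where
  "epshat n m x = (\<lambda>k. (1 + \<i>) / 2 * eps n m x k + (1 - \<i>) / 2 * eps m n x k)"

text \<open>Hilbert--Schmidt operators S_2 with <eta,tau>_2 = tr(eta^* tau) = sum_n <eta e_n, tau e_n>.\<close>
definition S2 :: "hop set" where
  "S2 = {T. bounded_op T \<and> summable (\<lambda>n. (l2norm (T (basis_e n)))\<^sup>2)}"

definition hs_inner :: "hop \<Rightarrow> hop \<Rightarrow> complex" where
  "hs_inner \<eta> \<tau> = (\<Sum>n. l2inner (\<eta> (basis_e n)) (\<tau> (basis_e n)))"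

definition hs_norm :: "hop \<Rightarrow> real" where
  "hs_norm \<eta> = sqrt (\<Sum>n. (l2norm (\<eta> (basis_e n)))\<^sup>2)"

type_synonym sop = "hop \<Rightarrow> hop"

text \<open>Bounded operators on S_2 (only their values on S_2 matter).\<close>
definition bounded_S2 :: "sop \<Rightarrow> bool" where
  "bounded_S2 A \<longleftrightarrow>
     (\<forall>\<eta>\<in>S2. A \<eta> \<in> S2) \<and>
     (\<forall>\<eta>\<in>S2. \<forall>\<tau>\<in>S2. A (\<lambda>x k. \<eta> x k + \<tau> x k) = (\<lambda>x k. A \<eta> x k + A \<tau> x k)) \<and>
     (\<forall>\<eta>\<in>S2. \<forall>c. A (\<lambda>x k. c * \<eta> x k) = (\<lambda>x k. c * A \<eta> x k)) \<and>
     (\<exists>C. \<forall>\<eta>\<in>S2. hs_norm (A \<eta>) \<le> C * hs_norm \<eta>)"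

definition nonneg_S2 :: "sop \<Rightarrow> bool" where
  "nonneg_S2 A \<longleftrightarrow> (\<forall>\<eta>\<in>S2. Im (hs_inner \<eta> (A \<eta>)) = 0 \<and> 0 \<le> Re (hs_inner \<eta> (A \<eta>)))"

definition positive_S2 :: "sop \<Rightarrow> bool" where
  "positive_S2 A \<longleftrightarrow> (\<forall>\<eta>\<in>S2. \<eta> \<noteq> (\<lambda>_ _. 0) \<longrightarrow>
      Im (hs_inner \<eta> (A \<eta>)) = 0 \<and> 0 < Re (hs_inner \<eta> (A \<eta>)))"

definition glb_S2 :: "sop \<Rightarrow> real" where
  "glb_S2 A = Inf ((\<lambda>\<eta>. Re (hs_inner \<eta> (A \<eta>))) ` {\<eta> \<in> S2. hs_norm \<eta> = 1})"

definition posdef_S2 :: "sop \<Rightarrow> bool" where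
  "posdef_S2 A \<longleftrightarrow> glb_S2 A > 0"

end

theory Submission
  imports Defs
begin

(* Read A through its values on rank-one operators: the operator b_nm = kernel_op A n m,
   (b_nm y)_k = (A eps_mk y)_n, satisfies <x, b_nm y> = <|e_n><y|, A |e_m><x|>_2, so it is
   bounded with norm at most ||A||, and since a non-negative A is hermitian, b_nm^* = b_mn.
   Hence a_nm = coeff_op A n m = ((1 - i) b_nm + (1 + i) b_mn) / 2 is selfadjoint, and as
   (1 + i)/2 a_nm + (1 - i)/2 a_mn = b_nm, the partial sum over n, m < N of epshat_nm eta a_nm
   equals P_N A (P_N eta), P_N the projection onto the first N coordinates; this tends to
   A eta in S_2.  Finally <x, a_nn x> = <|e_n><x|, A |e_n><x|>_2 with || |e_n><x| ||_2 = ||x||,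
   which passes non-negativity, positivity and the lower bound m_A from A to a_nn. *)

section \<open>Square-summable sequences\<close>

lemma square_summable_abs_mult:
  fixes f g :: "nat \<Rightarrow> real"
  assumes f: "summable (\<lambda>k. (f k)\<^sup>2)" and g: "summable (\<lambda>k. (g k)\<^sup>2)"
  shows "summable (\<lambda>k. \<bar>f k\<bar> * \<bar>g k\<bar>)"
    and "(\<Sum>k. \<bar>f k\<bar> * \<bar>g k\<bar>) \<le> sqrt (\<Sum>k. (f k)\<^sup>2) * sqrt (\<Sum>k. (g k)\<^sup>2)"
proof -
  have bound: "(\<Sum>k<n. \<bar>f k\<bar> * \<bar>g k\<bar>) \<le> sqrt (\<Sum>k. (f k)\<^sup>2) * sqrt (\<Sum>k. (g k)\<^sup>2)" for n
  proof -
    have "(\<Sum>k<n. \<bar>f k\<bar> * \<bar>g k\<bar>) \<le> L2_set f {..<n} * L2_set g {..<n}"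
      by (rule L2_set_mult_ineq)
    also have "\<dots> \<le> sqrt (\<Sum>k. (f k)\<^sup>2) * sqrt (\<Sum>k. (g k)\<^sup>2)"
      unfolding L2_set_def
      by (intro mult_mono real_sqrt_le_mono sum_le_suminf f g)
        (auto intro: suminf_nonneg sum_nonneg f g)
    finally show ?thesis .
  qed
  show s: "summable (\<lambda>k. \<bar>f k\<bar> * \<bar>g k\<bar>)"
    by (rule summableI_nonneg_bounded[OF _ bound]) simp
  show "(\<Sum>k. \<bar>f k\<bar> * \<bar>g k\<bar>) \<le> sqrt (\<Sum>k. (f k)\<^sup>2) * sqrt (\<Sum>k. (g k)\<^sup>2)"
    by (rule suminf_le_const[OF s bound])
qed

lemma square_summable_triangle:
  fixes f g h :: "nat \<Rightarrow> real"
  assumes f: "summable (\<lambda>k. (f k)\<^sup>2)" and g: "summable (\<lambda>k. (g k)\<^sup>2)"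
    and h: "\<And>k. \<bar>h k\<bar> \<le> \<bar>f k\<bar> + \<bar>g k\<bar>"
  shows "summable (\<lambda>k. (h k)\<^sup>2)"
    and "sqrt (\<Sum>k. (h k)\<^sup>2) \<le> sqrt (\<Sum>k. (f k)\<^sup>2) + sqrt (\<Sum>k. (g k)\<^sup>2)"
proof -
  let ?F = "sqrt (\<Sum>k. (f k)\<^sup>2)" and ?G = "sqrt (\<Sum>k. (g k)\<^sup>2)"
  have "L2_set h {..<n} \<le> ?F + ?G" for n
  proof -
    have "L2_set h {..<n} = L2_set (\<lambda>k. \<bar>h k\<bar>) {..<n}"
      by (simp add: L2_set_def)
    also have "\<dots> \<le> L2_set (\<lambda>k. \<bar>f k\<bar> + \<bar>g k\<bar>) {..<n}"
      by (rule L2_set_mono) (use h in auto)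
    also have "\<dots> \<le> L2_set (\<lambda>k. \<bar>f k\<bar>) {..<n} + L2_set (\<lambda>k. \<bar>g k\<bar>) {..<n}"
      by (rule L2_set_triangle_ineq)
    also have "\<dots> \<le> ?F + ?G"
      unfolding L2_set_def power2_abs by (intro add_mono real_sqrt_le_mono sum_le_suminf f g) auto
    finally show ?thesis .
  qed
  then have bound: "(\<Sum>k<n. (h k)\<^sup>2) \<le> (?F + ?G)\<^sup>2" for n
    unfolding L2_set_def by (rule sqrt_le_D)
  show s: "summable (\<lambda>k. (h k)\<^sup>2)"
    by (rule summableI_nonneg_bounded[OF _ bound]) simp
  have "sqrt (\<Sum>k. (h k)\<^sup>2) \<le> sqrt ((?F + ?G)\<^sup>2)"
    by (intro real_sqrt_le_mono suminf_le_const[OF s bound])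
  then show "sqrt (\<Sum>k. (h k)\<^sup>2) \<le> ?F + ?G"
    using suminf_nonneg[OF f] suminf_nonneg[OF g] by simp
qed

lemma mem_ell2: "x \<in> ell2 \<longleftrightarrow> summable (\<lambda>n. (cmod (x n))\<^sup>2)"
  by (simp add: ell2_def)

lemma zero_in_ell2 [simp]: "(\<lambda>_. 0) \<in> ell2"
  by (simp add: mem_ell2)

lemma l2norm_nonneg: "x \<in> ell2 \<Longrightarrow> 0 \<le> l2norm x"
  unfolding l2norm_def mem_ell2 by (auto intro: suminf_nonneg)

lemma l2norm_zero [simp]: "l2norm (\<lambda>_. 0) = 0"
  by (simp add: l2norm_def)

lemma ell2_scale:
  assumes "x \<in> ell2"
  shows "(\<lambda>k. c * x k) \<in> ell2" and "l2norm (\<lambda>k. c * x k) = cmod c * l2norm x"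
proof -
  have sq: "(cmod (c * x k))\<^sup>2 = (cmod c)\<^sup>2 * (cmod (x k))\<^sup>2" for k
    by (simp add: norm_mult power_mult_distrib)
  have s: "summable (\<lambda>k. (cmod (x k))\<^sup>2)" using assms by (simp add: mem_ell2)
  show "(\<lambda>k. c * x k) \<in> ell2" "l2norm (\<lambda>k. c * x k) = cmod c * l2norm x"
    unfolding mem_ell2 l2norm_def sq using s
    by (simp_all add: suminf_mult real_sqrt_mult summable_mult)
qed

lemma ell2_lincomb:
  assumes x: "x \<in> ell2" and y: "y \<in> ell2"
  shows "(\<lambda>k. a * x k + b * y k) \<in> ell2"
    and "l2norm (\<lambda>k. a * x k + b * y k) \<le> cmod a * l2norm x + cmod b * l2norm y"
proof -
  note tri = square_summable_triangle[of "\<lambda>k. cmod (a * x k)" "\<lambda>k. cmod (b * y k)"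
      "\<lambda>k. cmod (a * x k + b * y k)"]
  show "(\<lambda>k. a * x k + b * y k) \<in> ell2"
    using tri ell2_scale[OF x, of a] ell2_scale[OF y, of b]
    by (simp add: mem_ell2 norm_triangle_ineq)
  show "l2norm (\<lambda>k. a * x k + b * y k) \<le> cmod a * l2norm x + cmod b * l2norm y"
    using tri ell2_scale[OF x, of a] ell2_scale[OF y, of b]
    by (simp add: mem_ell2 l2norm_def norm_triangle_ineq)
qed

lemma ell2_add: "x \<in> ell2 \<Longrightarrow> y \<in> ell2 \<Longrightarrow> (\<lambda>k. x k + y k) \<in> ell2"
  using ell2_lincomb(1)[of x y 1 1] by simp

lemma ell2_diff: "x \<in> ell2 \<Longrightarrow> y \<in> ell2 \<Longrightarrow> (\<lambda>k. x k - y k) \<in> ell2"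
  using ell2_lincomb(1)[of x y 1 "-1"] by simp

lemma ell2_sum: "finite L \<Longrightarrow> (\<And>l. l \<in> L \<Longrightarrow> v l \<in> ell2) \<Longrightarrow> (\<lambda>k. \<Sum>l\<in>L. c l * v l k) \<in> ell2"
  by (induction L rule: finite_induct) (auto intro!: ell2_add ell2_scale(1))

lemma norm_le_l2norm: assumes "x \<in> ell2" shows "cmod (x j) \<le> l2norm x"
proof -
  have "(\<Sum>k\<in>{j}. (cmod (x k))\<^sup>2) \<le> (\<Sum>k. (cmod (x k))\<^sup>2)"
    by (rule sum_le_suminf) (use assms in \<open>auto simp: mem_ell2\<close>)
  then show ?thesis unfolding l2norm_def by (simp add: real_le_rsqrt)
qed

lemma scaled_basis_e: "(\<lambda>k. c * basis_e n k) \<in> ell2" "l2norm (\<lambda>k. c * basis_e n k) = cmod c"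
proof -
  have "(\<lambda>k. (cmod (c * basis_e n k))\<^sup>2) = (\<lambda>k. if k = n then (cmod c)\<^sup>2 else 0)"
    by (auto simp: basis_e_def)
  then have "(\<lambda>k. (cmod (c * basis_e n k))\<^sup>2) sums (cmod c)\<^sup>2"
    using sums_single[of n "\<lambda>_. (cmod c)\<^sup>2"] by simp
  then show "(\<lambda>k. c * basis_e n k) \<in> ell2" "l2norm (\<lambda>k. c * basis_e n k) = cmod c"
    by (auto simp: mem_ell2 l2norm_def sums_iff)
qed

lemma basis_e_in_ell2 [simp]: "basis_e n \<in> ell2"
  and l2norm_basis_e [simp]: "l2norm (basis_e n) = 1"
  using scaled_basis_e[of 1 n] by auto

definition trunc :: "nat \<Rightarrow> (nat \<Rightarrow> complex) \<Rightarrow> (nat \<Rightarrow> complex)" where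
  "trunc K v = (\<lambda>k. if k < K then v k else 0)"

lemma trunc_eq_sum_basis_e: "trunc K v = (\<lambda>k. \<Sum>l<K. v l * basis_e l k)"
  by (auto simp: trunc_def basis_e_def fun_eq_iff if_distrib cong: if_cong)

lemma trunc_in_ell2 [simp]: "trunc K v \<in> ell2"
  unfolding trunc_eq_sum_basis_e by (rule ell2_sum) auto

lemma tail_sums:
  assumes "v \<in> ell2"
  shows "(\<lambda>k. (cmod (trunc K v k - v k))\<^sup>2) sums ((\<Sum>k. (cmod (v k))\<^sup>2) - (\<Sum>k<K. (cmod (v k))\<^sup>2))"
proof -
  let ?f = "\<lambda>k. (cmod (v k))\<^sup>2"
  have "(\<lambda>k. ?f k - (if k \<in> {..<K} then ?f k else 0)) sums (suminf ?f - (\<Sum>k<K. ?f k))"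
    using assms by (intro sums_diff summable_sums sums_If_finite_set) (auto simp: mem_ell2)
  moreover have "(\<lambda>k. ?f k - (if k \<in> {..<K} then ?f k else 0)) = (\<lambda>k. (cmod (trunc K v k - v k))\<^sup>2)"
    by (auto simp: trunc_def)
  ultimately show ?thesis by simp
qed

lemma tail_l2norm_le: "v \<in> ell2 \<Longrightarrow> l2norm (\<lambda>k. trunc K v k - v k) \<le> l2norm v"
  using tail_sums[of v K] unfolding l2norm_def sums_iff
  by (auto intro!: real_sqrt_le_mono sum_nonneg)

lemma tail_tendsto_zero:
  assumes "v \<in> ell2"
  shows "(\<lambda>K. l2norm (\<lambda>k. trunc K v k - v k)) \<longlonglongrightarrow> 0"
proof -
  let ?f = "\<lambda>k. (cmod (v k))\<^sup>2"
  have "(\<lambda>K. suminf ?f - (\<Sum>k<K. ?f k)) \<longlonglongrightarrow> suminf ?f - suminf ?f"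
    using assms by (intro tendsto_diff tendsto_const summable_LIMSEQ) (simp add: mem_ell2)
  then have "(\<lambda>K. sqrt (suminf ?f - (\<Sum>k<K. ?f k))) \<longlonglongrightarrow> sqrt 0"
    by (intro tendsto_real_sqrt) simp
  then show ?thesis
    using tail_sums[OF assms] by (simp add: l2norm_def sums_iff)
qed

lemma l2norm_trunc: "l2norm (trunc K v) = sqrt (\<Sum>k<K. (cmod (v k))\<^sup>2)"
proof -
  have "(\<lambda>k. (cmod (trunc K v k))\<^sup>2) = (\<lambda>k. if k \<in> {..<K} then (cmod (v k))\<^sup>2 else 0)"
    by (auto simp: trunc_def)
  then show ?thesis
    unfolding l2norm_def using sums_If_finite_set[of "{..<K}" "\<lambda>k. (cmod (v k))\<^sup>2"]
    by (simp add: sums_iff)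
qed

lemma l2norm_trunc_le: "v \<in> ell2 \<Longrightarrow> l2norm (trunc K v) \<le> l2norm v"
  unfolding l2norm_def using trunc_in_ell2[of K v]
  by (intro real_sqrt_le_mono suminf_le) (auto simp: trunc_def mem_ell2)


lemma l2inner_sums:
  assumes x: "x \<in> ell2" and y: "y \<in> ell2"
  shows "(\<lambda>n. cnj (x n) * y n) sums l2inner x y"
    and "cmod (l2inner x y) \<le> l2norm x * l2norm y"
proof -
  have n: "norm (cnj (x n) * y n) = \<bar>cmod (x n)\<bar> * \<bar>cmod (y n)\<bar>" for n
    by (simp add: norm_mult)
  note cs = square_summable_abs_mult[of "\<lambda>n. cmod (x n)" "\<lambda>n. cmod (y n)", folded n,
      OF x[unfolded mem_ell2] y[unfolded mem_ell2]]
  show "(\<lambda>n. cnj (x n) * y n) sums l2inner x y"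
    unfolding l2inner_def by (rule summable_sums[OF summable_norm_cancel[OF cs(1)]])
  have "cmod (l2inner x y) \<le> (\<Sum>n. norm (cnj (x n) * y n))"
    unfolding l2inner_def by (rule summable_norm[OF cs(1)])
  also have "\<dots> \<le> l2norm x * l2norm y"
    unfolding l2norm_def using cs(2) by simp
  finally show "cmod (l2inner x y) \<le> l2norm x * l2norm y" .
qed

lemma l2inner_lincomb_right:
  assumes "x \<in> ell2" "y \<in> ell2" "z \<in> ell2"
  shows "l2inner x (\<lambda>k. a * y k + b * z k) = a * l2inner x y + b * l2inner x z"
proof -
  have "(\<lambda>n. a * (cnj (x n) * y n) + b * (cnj (x n) * z n))
      sums (a * l2inner x y + b * l2inner x z)"
    using assms by (intro sums_add sums_mult l2inner_sums)
  then show ?thesis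
    unfolding l2inner_def[of x "\<lambda>k. a * y k + b * z k"] by (simp add: sums_iff algebra_simps)
qed

lemma l2inner_cnj_commute: "x \<in> ell2 \<Longrightarrow> y \<in> ell2 \<Longrightarrow> l2inner y x = cnj (l2inner x y)"
  using sums_cnj[THEN iffD2, OF l2inner_sums(1)[of x y]] unfolding l2inner_def[of y x]
  by (simp add: sums_iff mult.commute)

lemma l2inner_lincomb_left:
  assumes "x \<in> ell2" "y \<in> ell2" "z \<in> ell2"
  shows "l2inner (\<lambda>k. a * y k + b * z k) x = cnj a * l2inner y x + cnj b * l2inner z x"
proof -
  have "l2inner (\<lambda>k. a * y k + b * z k) x = cnj (l2inner x (\<lambda>k. a * y k + b * z k))"
    using assms by (intro l2inner_cnj_commute ell2_lincomb(1))
  also have "\<dots> = cnj a * cnj (l2inner x y) + cnj b * cnj (l2inner x z)"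
    by (simp add: l2inner_lincomb_right[OF assms])
  finally show ?thesis
    using assms by (simp add: l2inner_cnj_commute[of x y] l2inner_cnj_commute[of x z])
qed

lemma l2inner_scaled_basis_e: "l2inner (\<lambda>k. c * basis_e n k) v = cnj c * v n"
proof -
  have "(\<lambda>k. cnj (c * basis_e n k) * v k) = (\<lambda>k. if k = n then cnj c * v n else 0)"
    by (auto simp: basis_e_def)
  then show ?thesis
    unfolding l2inner_def using sums_single[of n "\<lambda>_. cnj c * v n"] by (simp add: sums_iff)
qed

lemma l2inner_basis_e [simp]: "l2inner (basis_e m) z = z m"
  using l2inner_scaled_basis_e[of 1 m z] by simp

section \<open>Bounded operators on l2\<close>

lemma bounded_opD:
  assumes "bounded_op T"
  shows bounded_op_outside: "x \<notin> ell2 \<Longrightarrow> T x = (\<lambda>_. 0)"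
    and bounded_op_in_ell2: "T x \<in> ell2"
    and bounded_op_lincomb_arg:
      "x \<in> ell2 \<Longrightarrow> y \<in> ell2 \<Longrightarrow> T (\<lambda>k. a * x k + b * y k) = (\<lambda>k. a * T x k + b * T y k)"
proof -
  note T = assms[unfolded bounded_op_def]
  show "x \<notin> ell2 \<Longrightarrow> T x = (\<lambda>_. 0)" using T by blast
  show "T x \<in> ell2" using T by (cases "x \<in> ell2") simp_all
  assume "x \<in> ell2" "y \<in> ell2"
  then show "T (\<lambda>k. a * x k + b * y k) = (\<lambda>k. a * T x k + b * T y k)"
    using T ell2_scale(1)[of x a] ell2_scale(1)[of y b] by simp
qed

lemma bounded_op_bound:
  assumes "bounded_op T"
  obtains C where "\<And>x. x \<in> ell2 \<Longrightarrow> l2norm (T x) \<le> C * l2norm x"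
  using assms unfolding bounded_op_def by blast

lemma bounded_op_diff_arg:
  "bounded_op T \<Longrightarrow> x \<in> ell2 \<Longrightarrow> y \<in> ell2 \<Longrightarrow> T (\<lambda>k. x k - y k) = (\<lambda>k. T x k - T y k)"
  using bounded_op_lincomb_arg[of T x y 1 "-1"] by simp

lemma bounded_op_sum_arg:
  assumes "bounded_op T" "finite L" "\<And>l. l \<in> L \<Longrightarrow> v l \<in> ell2"
  shows "T (\<lambda>k. \<Sum>l\<in>L. c l * v l k) = (\<lambda>k. \<Sum>l\<in>L. c l * T (v l) k)"
  using assms(2,3)
proof (induction L rule: finite_induct)
  case empty
  then show ?case
    using bounded_op_lincomb_arg[OF assms(1) zero_in_ell2 zero_in_ell2, of 0 0] by simp
next
  case (insert l0 L)
  then show ?case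
    using bounded_op_lincomb_arg[OF assms(1), of "v l0" "\<lambda>k. \<Sum>l\<in>L. c l * v l k" "c l0" 1]
      ell2_sum[OF insert.hyps(1), of v c]
    by simp
qed

lemma bounded_op_lincomb:
  assumes S: "bounded_op S" and T: "bounded_op T"
  shows "bounded_op (\<lambda>x k. a * S x k + b * T x k)"
proof -
  obtain C1 where C1: "\<And>x. x \<in> ell2 \<Longrightarrow> l2norm (S x) \<le> C1 * l2norm x"
    using bounded_op_bound[OF S] by blast
  obtain C2 where C2: "\<And>x. x \<in> ell2 \<Longrightarrow> l2norm (T x) \<le> C2 * l2norm x"
    using bounded_op_bound[OF T] by blast
  have "l2norm (\<lambda>k. a * S x k + b * T x k) \<le> (cmod a * C1 + cmod b * C2) * l2norm x"
    if x: "x \<in> ell2" for x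
  proof -
    have "l2norm (\<lambda>k. a * S x k + b * T x k) \<le> cmod a * l2norm (S x) + cmod b * l2norm (T x)"
      by (intro ell2_lincomb bounded_op_in_ell2 S T)
    also have "\<dots> \<le> cmod a * (C1 * l2norm x) + cmod b * (C2 * l2norm x)"
      by (intro add_mono mult_left_mono C1 C2 x) auto
    finally show ?thesis by (simp add: algebra_simps)
  qed
  then show ?thesis
    unfolding bounded_op_def
  proof (intro conjI ballI allI impI exI)
    fix x assume "x \<notin> ell2"
    then show "(\<lambda>k. a * S x k + b * T x k) = (\<lambda>_. 0)"
      using bounded_op_outside[OF S] bounded_op_outside[OF T] by simp
  next
    fix x show "(\<lambda>k. a * S x k + b * T x k) \<in> ell2"
      by (intro ell2_lincomb bounded_op_in_ell2 S T)
  next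
    fix x y assume "x \<in> ell2" "y \<in> ell2"
    then show "(\<lambda>k. a * S (\<lambda>k. x k + y k) k + b * T (\<lambda>k. x k + y k) k) =
        (\<lambda>k. (a * S x k + b * T x k) + (a * S y k + b * T y k))"
      using bounded_op_lincomb_arg[OF S, of x y 1 1] bounded_op_lincomb_arg[OF T, of x y 1 1]
      by (simp add: algebra_simps)
  next
    fix x c assume "x \<in> ell2"
    then show "(\<lambda>k. a * S (\<lambda>k. c * x k) k + b * T (\<lambda>k. c * x k) k)
        = (\<lambda>k. c * (a * S x k + b * T x k))"
      using bounded_op_lincomb_arg[OF S, of x x c 0] bounded_op_lincomb_arg[OF T, of x x c 0]
      by (simp add: algebra_simps)
  qed
qed

lemma tendsto_component_of_l2norm:
  assumes "\<And>n. X n \<in> ell2" "Y \<in> ell2" "(\<lambda>n. l2norm (\<lambda>k. X n k - Y k)) \<longlonglongrightarrow> 0"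
  shows "(\<lambda>n. X n j) \<longlonglongrightarrow> Y j"
proof -
  have "(\<lambda>n. X n j - Y j) \<longlonglongrightarrow> 0"
    by (rule Lim_null_comparison[OF _ assms(3)])
      (use norm_le_l2norm[OF ell2_diff[OF assms(1,2)]] in simp)
  then show ?thesis by (simp add: LIM_zero_iff)
qed

lemma bounded_op_expansion:
  assumes T: "bounded_op T" and v: "v \<in> ell2"
  shows "(\<lambda>l. v l * T (basis_e l) j) sums T v j"
proof -
  obtain C where C: "\<And>x. x \<in> ell2 \<Longrightarrow> l2norm (T x) \<le> C * l2norm x"
    using bounded_op_bound[OF T] by blast
  have partial: "T (trunc L v) j = (\<Sum>l<L. v l * T (basis_e l) j)" for L
    unfolding trunc_eq_sum_basis_e by (simp add: bounded_op_sum_arg[OF T])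
  have "(\<lambda>L. l2norm (\<lambda>k. T (trunc L v) k - T v k)) \<longlonglongrightarrow> 0"
  proof (rule tendsto_sandwich[of "\<lambda>_. 0" _ _ "\<lambda>L. C * l2norm (\<lambda>k. trunc L v k - v k)"])
    show "\<forall>\<^sub>F L in sequentially. 0 \<le> l2norm (\<lambda>k. T (trunc L v) k - T v k)"
      by (simp add: l2norm_nonneg ell2_diff bounded_op_in_ell2[OF T])
    show "\<forall>\<^sub>F L in sequentially.
        l2norm (\<lambda>k. T (trunc L v) k - T v k) \<le> C * l2norm (\<lambda>k. trunc L v k - v k)"
      using C[OF ell2_diff[OF trunc_in_ell2 v]]
      by (simp add: bounded_op_diff_arg[OF T trunc_in_ell2 v])
    show "(\<lambda>L. C * l2norm (\<lambda>k. trunc L v k - v k)) \<longlonglongrightarrow> 0"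
      using tendsto_mult_right_zero[OF tail_tendsto_zero[OF v]] .
  qed simp
  then have "(\<lambda>L. T (trunc L v) j) \<longlonglongrightarrow> T v j"
    by (intro tendsto_component_of_l2norm bounded_op_in_ell2[OF T])
  then show ?thesis unfolding sums_def partial .
qed

section \<open>Hilbert--Schmidt operators\<close>

lemma S2D:
  assumes "\<sigma> \<in> S2"
  shows S2_bounded_op: "bounded_op \<sigma>"
    and S2_summable: "summable (\<lambda>n. (l2norm (\<sigma> (basis_e n)))\<^sup>2)"
  using assms by (simp_all add: S2_def)

lemma hs_norm_nonneg: "\<sigma> \<in> S2 \<Longrightarrow> 0 \<le> hs_norm \<sigma>"
  unfolding hs_norm_def by (auto intro!: suminf_nonneg S2_summable)

lemma S2_column_in_ell2: "\<sigma> \<in> S2 \<Longrightarrow> \<sigma> x \<in> ell2"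
  by (rule bounded_op_in_ell2[OF S2_bounded_op])

lemma hs_norm_scaled_columns:
  assumes "\<sigma> \<in> S2"
  shows "summable (\<lambda>j. (c * l2norm (\<sigma> (basis_e j)))\<^sup>2)"
    and "sqrt (\<Sum>j. (c * l2norm (\<sigma> (basis_e j)))\<^sup>2) = \<bar>c\<bar> * hs_norm \<sigma>"
  using S2_summable[OF assms]
  by (simp_all add: power_mult_distrib suminf_mult real_sqrt_mult hs_norm_def)

lemma S2_lincomb:
  assumes \<sigma>: "\<sigma> \<in> S2" and \<tau>: "\<tau> \<in> S2"
  shows "(\<lambda>x k. a * \<sigma> x k + b * \<tau> x k) \<in> S2"
    and "hs_norm (\<lambda>x k. a * \<sigma> x k + b * \<tau> x k) \<le> cmod a * hs_norm \<sigma> + cmod b * hs_norm \<tau>"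
proof -
  let ?h = "\<lambda>j. l2norm (\<lambda>k. a * \<sigma> (basis_e j) k + b * \<tau> (basis_e j) k)"
  have "\<bar>?h j\<bar> \<le> \<bar>cmod a * l2norm (\<sigma> (basis_e j))\<bar> + \<bar>cmod b * l2norm (\<tau> (basis_e j))\<bar>" for j
  proof -
    have x: "\<sigma> (basis_e j) \<in> ell2" "\<tau> (basis_e j) \<in> ell2"
      by (simp_all add: S2_column_in_ell2 \<sigma> \<tau>)
    show ?thesis
      using ell2_lincomb[OF x, where a=a and b=b] l2norm_nonneg[OF ell2_lincomb(1)[OF x]]
        l2norm_nonneg[OF x(1)] l2norm_nonneg[OF x(2)]
      by (simp add: abs_mult)
  qed
  note tri = square_summable_triangle[OF hs_norm_scaled_columns(1)[OF \<sigma>]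
      hs_norm_scaled_columns(1)[OF \<tau>] this]
  have "bounded_op (\<lambda>x k. a * \<sigma> x k + b * \<tau> x k)"
    by (intro bounded_op_lincomb S2_bounded_op \<sigma> \<tau>)
  then show "(\<lambda>x k. a * \<sigma> x k + b * \<tau> x k) \<in> S2"
    using tri(1) by (simp add: S2_def)
  show "hs_norm (\<lambda>x k. a * \<sigma> x k + b * \<tau> x k) \<le> cmod a * hs_norm \<sigma> + cmod b * hs_norm \<tau>"
    using tri(2) unfolding hs_norm_scaled_columns(2)[OF \<sigma>] hs_norm_scaled_columns(2)[OF \<tau>]
    by (simp add: hs_norm_def)
qed

lemma S2_diff: "\<sigma> \<in> S2 \<Longrightarrow> \<tau> \<in> S2 \<Longrightarrow> (\<lambda>x k. \<sigma> x k - \<tau> x k) \<in> S2"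
  using S2_lincomb(1)[of \<sigma> \<tau> 1 "-1"] by simp

lemma S2_add: "\<sigma> \<in> S2 \<Longrightarrow> \<tau> \<in> S2 \<Longrightarrow> (\<lambda>x k. \<sigma> x k + \<tau> x k) \<in> S2"
  using S2_lincomb(1)[of \<sigma> \<tau> 1 1] by simp

lemma hs_norm_add_le:
  "\<sigma> \<in> S2 \<Longrightarrow> \<tau> \<in> S2 \<Longrightarrow> hs_norm (\<lambda>x k. \<sigma> x k + \<tau> x k) \<le> hs_norm \<sigma> + hs_norm \<tau>"
  using S2_lincomb(2)[of \<sigma> \<tau> 1 1] by simp

lemma S2_zero [simp]: "(\<lambda>_ _. 0) \<in> S2"
proof -
  have "bounded_op (\<lambda>_ _. 0)"
    unfolding bounded_op_def by (simp, rule exI[of _ 0], simp add: l2norm_nonneg)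
  then show ?thesis by (simp add: S2_def)
qed

lemma S2_sum: "finite L \<Longrightarrow> (\<And>l. l \<in> L \<Longrightarrow> \<sigma> l \<in> S2) \<Longrightarrow> (\<lambda>x k. \<Sum>l\<in>L. c l * \<sigma> l x k) \<in> S2"
proof (induction L rule: finite_induct)
  case (insert l0 L)
  then show ?case using S2_lincomb(1)[of "\<sigma> l0" "\<lambda>x k. \<Sum>l\<in>L. c l * \<sigma> l x k" "c l0" 1] by simp
qed simp

lemma hs_inner_sums:
  assumes \<sigma>: "\<sigma> \<in> S2" and \<tau>: "\<tau> \<in> S2"
  shows "(\<lambda>n. l2inner (\<sigma> (basis_e n)) (\<tau> (basis_e n))) sums hs_inner \<sigma> \<tau>"
proof -
  have "norm (l2inner (\<sigma> (basis_e n)) (\<tau> (basis_e n)))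
      \<le> \<bar>l2norm (\<sigma> (basis_e n))\<bar> * \<bar>l2norm (\<tau> (basis_e n))\<bar>" for n
    using l2inner_sums(2)[OF S2_column_in_ell2[OF \<sigma>] S2_column_in_ell2[OF \<tau>]]
      l2norm_nonneg[OF S2_column_in_ell2[OF \<sigma>]] l2norm_nonneg[OF S2_column_in_ell2[OF \<tau>]] by simp
  then have "summable (\<lambda>n. l2inner (\<sigma> (basis_e n)) (\<tau> (basis_e n)))"
    by (rule summable_comparison_test'[OF
          square_summable_abs_mult(1)[OF S2_summable[OF \<sigma>] S2_summable[OF \<tau>]]])
  then show ?thesis unfolding hs_inner_def by (rule summable_sums)
qed

lemma hs_inner_lincomb_right:
  assumes "\<sigma> \<in> S2" "\<tau> \<in> S2" "\<rho> \<in> S2"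
  shows "hs_inner \<sigma> (\<lambda>x k. a * \<tau> x k + b * \<rho> x k) = a * hs_inner \<sigma> \<tau> + b * hs_inner \<sigma> \<rho>"
proof -
  have "(\<lambda>n. a * l2inner (\<sigma> (basis_e n)) (\<tau> (basis_e n))
          + b * l2inner (\<sigma> (basis_e n)) (\<rho> (basis_e n)))
      sums (a * hs_inner \<sigma> \<tau> + b * hs_inner \<sigma> \<rho>)"
    using assms by (intro sums_add sums_mult hs_inner_sums)
  then show ?thesis
    unfolding hs_inner_def[of \<sigma> "\<lambda>x k. a * \<tau> x k + b * \<rho> x k"]
    using assms by (simp add: sums_iff l2inner_lincomb_right S2_column_in_ell2)
qed

lemma hs_inner_cnj_commute:
  assumes "\<sigma> \<in> S2" "\<tau> \<in> S2"
  shows "hs_inner \<tau> \<sigma> = cnj (hs_inner \<sigma> \<tau>)"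
proof -
  have "l2inner (\<tau> (basis_e n)) (\<sigma> (basis_e n))
      = cnj (l2inner (\<sigma> (basis_e n)) (\<tau> (basis_e n)))" for n
    using assms by (intro l2inner_cnj_commute S2_column_in_ell2)
  then show ?thesis
    using sums_cnj[THEN iffD2, OF hs_inner_sums[OF assms]]
    by (simp add: hs_inner_def[of \<tau> \<sigma>] sums_iff)
qed

lemma hs_inner_lincomb_left:
  assumes "\<sigma> \<in> S2" "\<tau> \<in> S2" "\<rho> \<in> S2"
  shows "hs_inner (\<lambda>x k. a * \<tau> x k + b * \<rho> x k) \<sigma> = cnj a * hs_inner \<tau> \<sigma> + cnj b * hs_inner \<rho> \<sigma>"
proof -
  have "hs_inner (\<lambda>x k. a * \<tau> x k + b * \<rho> x k) \<sigma> = cnj (hs_inner \<sigma> (\<lambda>x k. a * \<tau> x k + b * \<rho> x k))"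
    using assms by (intro hs_inner_cnj_commute S2_lincomb(1))
  also have "\<dots> = cnj a * cnj (hs_inner \<sigma> \<tau>) + cnj b * cnj (hs_inner \<sigma> \<rho>)"
    by (simp add: hs_inner_lincomb_right[OF assms])
  finally show ?thesis
    using assms by (simp add: hs_inner_cnj_commute[of \<sigma> \<tau>] hs_inner_cnj_commute[of \<sigma> \<rho>])
qed

lemma norm_apply_le_hs_norm:
  assumes \<sigma>: "\<sigma> \<in> S2" and y: "y \<in> ell2"
  shows "cmod (\<sigma> y n) \<le> l2norm y * hs_norm \<sigma>"
proof -
  let ?g = "\<lambda>l. cmod (\<sigma> (basis_e l) n)"
  have g_le: "(?g l)\<^sup>2 \<le> (l2norm (\<sigma> (basis_e l)))\<^sup>2" for l
    by (intro power_mono norm_le_l2norm S2_column_in_ell2[OF \<sigma>]) auto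
  have g: "summable (\<lambda>l. (?g l)\<^sup>2)"
    by (rule summable_comparison_test'[OF S2_summable[OF \<sigma>]]) (use g_le in simp)
  note cs = square_summable_abs_mult[of "\<lambda>l. cmod (y l)" ?g, OF _ g]
  have "cmod (\<sigma> y n) = cmod (\<Sum>l. y l * \<sigma> (basis_e l) n)"
    using bounded_op_expansion[OF S2_bounded_op[OF \<sigma>] y] by (simp add: sums_iff)
  also have "\<dots> \<le> (\<Sum>l. \<bar>cmod (y l)\<bar> * \<bar>?g l\<bar>)"
    using summable_norm[of "\<lambda>l. y l * \<sigma> (basis_e l) n"] cs y by (simp add: mem_ell2 norm_mult)
  also have "\<dots> \<le> sqrt (\<Sum>l. (cmod (y l))\<^sup>2) * sqrt (\<Sum>l. (?g l)\<^sup>2)"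
    using cs y by (simp add: mem_ell2)
  also have "\<dots> \<le> l2norm y * hs_norm \<sigma>"
  proof -
    have "sqrt (\<Sum>l. (?g l)\<^sup>2) \<le> hs_norm \<sigma>"
      unfolding hs_norm_def by (intro real_sqrt_le_mono suminf_le g_le g S2_summable[OF \<sigma>])
    then show ?thesis
      unfolding l2norm_def[symmetric] by (rule mult_left_mono[OF _ l2norm_nonneg[OF y]])
  qed
  finally show ?thesis .
qed

definition trunc_op :: "nat \<Rightarrow> hop \<Rightarrow> hop" where
  "trunc_op N \<sigma> x = trunc N (\<sigma> x)"

lemma trunc_op_S2:
  assumes \<sigma>: "\<sigma> \<in> S2"
  shows "trunc_op N \<sigma> \<in> S2" and "hs_norm (trunc_op N \<sigma>) \<le> hs_norm \<sigma>"
proof -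
  have B: "bounded_op \<sigma>" using S2_bounded_op[OF \<sigma>] .
  obtain C where C: "\<And>x. x \<in> ell2 \<Longrightarrow> l2norm (\<sigma> x) \<le> C * l2norm x"
    using bounded_op_bound[OF B] by blast
  have "bounded_op (trunc_op N \<sigma>)"
    unfolding bounded_op_def trunc_op_def
  proof (intro conjI ballI allI impI exI)
    fix x assume "x \<notin> ell2"
    then show "trunc N (\<sigma> x) = (\<lambda>_. 0)" by (simp add: bounded_op_outside[OF B] trunc_def)
  next
    fix x y assume "x \<in> ell2" "y \<in> ell2"
    then show "trunc N (\<sigma> (\<lambda>k. x k + y k)) = (\<lambda>k. trunc N (\<sigma> x) k + trunc N (\<sigma> y) k)"
      using bounded_op_lincomb_arg[OF B, of x y 1 1] by (simp add: trunc_def fun_eq_iff)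
  next
    fix x c assume "x \<in> ell2"
    then show "trunc N (\<sigma> (\<lambda>k. c * x k)) = (\<lambda>k. c * trunc N (\<sigma> x) k)"
      using bounded_op_lincomb_arg[OF B, of x x c 0] by (simp add: trunc_def fun_eq_iff)
  next
    fix x assume "x \<in> ell2"
    then show "l2norm (trunc N (\<sigma> x)) \<le> C * l2norm x"
      using l2norm_trunc_le[OF bounded_op_in_ell2[OF B]] C by (blast intro: order_trans)
  qed simp
  moreover have col: "(l2norm (trunc_op N \<sigma> (basis_e n)))\<^sup>2 \<le> (l2norm (\<sigma> (basis_e n)))\<^sup>2" for n
    unfolding trunc_op_def
    by (intro power_mono l2norm_trunc_le l2norm_nonneg bounded_op_in_ell2[OF B] trunc_in_ell2)
  moreover have "summable (\<lambda>n. (l2norm (trunc_op N \<sigma> (basis_e n)))\<^sup>2)"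
    by (rule summable_comparison_test'[OF S2_summable[OF \<sigma>]]) (use col in simp)
  ultimately show "trunc_op N \<sigma> \<in> S2" "hs_norm (trunc_op N \<sigma>) \<le> hs_norm \<sigma>"
    unfolding hs_norm_def S2_def using S2_summable[OF \<sigma>]
    by (auto intro!: real_sqrt_le_mono suminf_le)
qed

lemma trunc_op_tendsto:
  assumes \<tau>: "\<tau> \<in> S2"
  shows "(\<lambda>N. hs_norm (\<lambda>x k. trunc_op N \<tau> x k - \<tau> x k)) \<longlonglongrightarrow> 0"
proof -
  have col: "\<tau> (basis_e j) \<in> ell2" for j by (rule S2_column_in_ell2[OF \<tau>])
  define a where "a j N = (l2norm (\<lambda>k. trunc N (\<tau> (basis_e j)) k - \<tau> (basis_e j) k))\<^sup>2" for j N
  have lim: "(\<lambda>N. a j N) \<longlonglongrightarrow> 0" for j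
    unfolding a_def using tendsto_power[OF tail_tendsto_zero[OF col], where n=2] by simp
  have bound: "norm (a j N) \<le> (l2norm (\<tau> (basis_e j)))\<^sup>2" for j N
    unfolding a_def using tail_l2norm_le[OF col] l2norm_nonneg[OF ell2_diff[OF trunc_in_ell2 col]]
    by (simp add: power_mono)
  have "(\<lambda>N. \<Sum>j. a j N) \<longlonglongrightarrow> (\<Sum>j. 0)"
    using tannerys_theorem[where a = a and b = "\<lambda>_. 0" and F = sequentially
        and M = "\<lambda>j. (l2norm (\<tau> (basis_e j)))\<^sup>2"] lim bound S2_summable[OF \<tau>]
    by (auto intro: always_eventually)
  then have "(\<lambda>N. sqrt (\<Sum>j. a j N)) \<longlonglongrightarrow> sqrt 0"
    by (intro tendsto_real_sqrt) simp
  then show ?thesis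
    by (simp add: hs_norm_def a_def trunc_op_def)
qed

section \<open>Bounded operators on S2\<close>

lemma bounded_S2D:
  assumes "bounded_S2 A"
  shows bounded_S2_S2: "\<eta> \<in> S2 \<Longrightarrow> A \<eta> \<in> S2"
    and bounded_S2_lincomb_arg:
      "\<eta> \<in> S2 \<Longrightarrow> \<tau> \<in> S2 \<Longrightarrow> A (\<lambda>x k. a * \<eta> x k + b * \<tau> x k) = (\<lambda>x k. a * A \<eta> x k + b * A \<tau> x k)"
  using assms S2_lincomb(1)[of \<eta> \<eta> a 0] S2_lincomb(1)[of \<tau> \<tau> b 0]
  by (auto simp: bounded_S2_def)

lemma bounded_S2_bound:
  assumes "bounded_S2 A"
  obtains C where "C \<ge> 0" "\<And>\<eta>. \<eta> \<in> S2 \<Longrightarrow> hs_norm (A \<eta>) \<le> C * hs_norm \<eta>"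
proof -
  obtain C where C: "\<And>\<eta>. \<eta> \<in> S2 \<Longrightarrow> hs_norm (A \<eta>) \<le> C * hs_norm \<eta>"
    using assms unfolding bounded_S2_def by blast
  have "hs_norm (A \<eta>) \<le> max C 0 * hs_norm \<eta>" if "\<eta> \<in> S2" for \<eta>
    using C[OF that] mult_right_mono[OF max.cobounded1 hs_norm_nonneg[OF that], of C 0] by linarith
  then show ?thesis using that[of "max C 0"] by simp
qed

lemma bounded_S2_diff_arg:
  "bounded_S2 A \<Longrightarrow> \<eta> \<in> S2 \<Longrightarrow> \<tau> \<in> S2 \<Longrightarrow> A (\<lambda>x k. \<eta> x k - \<tau> x k) = (\<lambda>x k. A \<eta> x k - A \<tau> x k)"
  using bounded_S2_lincomb_arg[of A \<eta> \<tau> 1 "-1"] by simp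

lemma bounded_S2_sum_arg:
  assumes "bounded_S2 A" "finite L" "\<And>l. l \<in> L \<Longrightarrow> \<sigma> l \<in> S2"
  shows "A (\<lambda>x k. \<Sum>l\<in>L. c l * \<sigma> l x k) = (\<lambda>x k. \<Sum>l\<in>L. c l * A (\<sigma> l) x k)"
  using assms(2,3)
proof (induction L rule: finite_induct)
  case empty
  then show ?case using bounded_S2_lincomb_arg[OF assms(1) S2_zero S2_zero, of 0 0] by simp
next
  case (insert l0 L)
  then show ?case
    using bounded_S2_lincomb_arg[OF assms(1), of "\<sigma> l0" "\<lambda>x k. \<Sum>l\<in>L. c l * \<sigma> l x k" "c l0" 1]
      S2_sum[OF insert.hyps(1), of \<sigma> c]
    by simp
qed

lemma nonneg_S2_hermitian:
  assumes A: "bounded_S2 A" and N: "nonneg_S2 A" and \<sigma>: "\<sigma> \<in> S2" and \<tau>: "\<tau> \<in> S2"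
  shows "hs_inner \<sigma> (A \<tau>) = cnj (hs_inner \<tau> (A \<sigma>))"
proof -
  have A\<sigma>: "A \<sigma> \<in> S2" and A\<tau>: "A \<tau> \<in> S2" using A \<sigma> \<tau> by (simp_all add: bounded_S2_S2)
  have polar: "hs_inner (\<lambda>x k. 1 * \<sigma> x k + c * \<tau> x k) (A (\<lambda>x k. 1 * \<sigma> x k + c * \<tau> x k))
      = hs_inner \<sigma> (A \<sigma>) + c * hs_inner \<sigma> (A \<tau>) + cnj c * hs_inner \<tau> (A \<sigma>)
        + cnj c * c * hs_inner \<tau> (A \<tau>)" for c
  proof -
    have "A (\<lambda>x k. 1 * \<sigma> x k + c * \<tau> x k) = (\<lambda>x k. 1 * A \<sigma> x k + c * A \<tau> x k)"
      by (rule bounded_S2_lincomb_arg[OF A \<sigma> \<tau>])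
    moreover have "hs_inner (\<lambda>x k. 1 * \<sigma> x k + c * \<tau> x k) (\<lambda>x k. 1 * A \<sigma> x k + c * A \<tau> x k)
        = cnj 1 * hs_inner \<sigma> (\<lambda>x k. 1 * A \<sigma> x k + c * A \<tau> x k)
          + cnj c * hs_inner \<tau> (\<lambda>x k. 1 * A \<sigma> x k + c * A \<tau> x k)"
      by (intro hs_inner_lincomb_left S2_lincomb(1) A\<sigma> A\<tau> \<sigma> \<tau>)
    ultimately show ?thesis
      using hs_inner_lincomb_right[OF \<sigma> A\<sigma> A\<tau>, of 1 c] hs_inner_lincomb_right[OF \<tau> A\<sigma> A\<tau>, of 1 c]
      by (simp add: algebra_simps)
  qed
  have real_form: "Im (hs_inner \<eta> (A \<eta>)) = 0" if "\<eta> \<in> S2" for \<eta>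
    using N that by (simp add: nonneg_S2_def)
  have "Im (hs_inner \<sigma> (A \<tau>)) + Im (hs_inner \<tau> (A \<sigma>)) = 0"
    using real_form[OF S2_lincomb(1)[OF \<sigma> \<tau>, of 1 1]] polar[of 1] real_form[OF \<sigma>] real_form[OF \<tau>]
    by simp
  moreover have "Re (hs_inner \<sigma> (A \<tau>)) - Re (hs_inner \<tau> (A \<sigma>)) = 0"
    using real_form[OF S2_lincomb(1)[OF \<sigma> \<tau>, of 1 \<i>]] polar[of \<i>] real_form[OF \<sigma>] real_form[OF \<tau>]
    by simp
  ultimately show ?thesis by (simp add: complex_eq_iff)
qed

section \<open>Rank-one operators\<close>

definition rank1 :: "nat \<Rightarrow> (nat \<Rightarrow> complex) \<Rightarrow> hop" where
  "rank1 n x z = (if z \<in> ell2 then (\<lambda>k. l2inner x z * basis_e n k) else (\<lambda>_. 0))"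

lemma eps_eq_rank1: "eps n m = rank1 n (basis_e m)"
  by (auto simp: eps_def rank1_def fun_eq_iff)

lemma rank1_bounded_op:
  assumes x: "x \<in> ell2"
  shows "bounded_op (rank1 n x)"
  unfolding bounded_op_def
proof (intro conjI ballI allI impI exI)
  fix z assume "z \<notin> ell2"
  then show "rank1 n x z = (\<lambda>_. 0)" by (simp add: rank1_def)
next
  fix z show "rank1 n x z \<in> ell2" by (simp add: rank1_def scaled_basis_e)
next
  fix y z assume "y \<in> ell2" "z \<in> ell2"
  then show "rank1 n x (\<lambda>k. y k + z k) = (\<lambda>k. rank1 n x y k + rank1 n x z k)"
    using l2inner_lincomb_right[OF x, of y z 1 1] by (simp add: rank1_def ell2_add distrib_right)
next
  fix z c assume "z \<in> ell2"
  then show "rank1 n x (\<lambda>k. c * z k) = (\<lambda>k. c * rank1 n x z k)"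
    using l2inner_lincomb_right[OF x, of z z c 0] by (simp add: rank1_def ell2_scale(1) mult.assoc)
next
  fix z assume z: "z \<in> ell2"
  show "l2norm (rank1 n x z) \<le> l2norm x * l2norm z"
    using z scaled_basis_e(2)[of "l2inner x z" n] l2inner_sums(2)[OF x z] by (simp add: rank1_def)
qed

lemma rank1_basis_e: "x \<in> ell2 \<Longrightarrow> rank1 n x (basis_e j) = (\<lambda>k. cnj (x j) * basis_e n k)"
  using l2inner_cnj_commute[of "basis_e j" x] by (simp add: rank1_def)

lemma rank1_S2:
  assumes x: "x \<in> ell2"
  shows "rank1 n x \<in> S2" and "hs_norm (rank1 n x) = l2norm x"
proof -
  have cols: "(\<lambda>j. (l2norm (rank1 n x (basis_e j)))\<^sup>2) = (\<lambda>j. (cmod (x j))\<^sup>2)"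
    by (simp add: rank1_basis_e[OF x] scaled_basis_e)
  show "rank1 n x \<in> S2"
    using x rank1_bounded_op[OF x] by (simp add: S2_def cols mem_ell2)
  show "hs_norm (rank1 n x) = l2norm x"
    unfolding hs_norm_def cols by (simp add: l2norm_def)
qed

lemma eps_S2: "eps n m \<in> S2"
  by (simp add: eps_eq_rank1 rank1_S2)

lemma rank1_diff:
  "x \<in> ell2 \<Longrightarrow> y \<in> ell2 \<Longrightarrow> (\<lambda>z k. rank1 n x z k - rank1 n y z k) = rank1 n (\<lambda>k. x k - y k)"
  using l2inner_lincomb_left[of _ x y 1 "-1"] by (auto simp: rank1_def fun_eq_iff left_diff_distrib)

lemma rank1_trunc: "rank1 n (trunc L x) = (\<lambda>z k. \<Sum>l<L. cnj (x l) * eps n l z k)"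
proof (intro ext)
  fix z k
  show "rank1 n (trunc L x) z k = (\<Sum>l<L. cnj (x l) * eps n l z k)"
  proof (cases "z \<in> ell2")
    case True
    have "(\<lambda>l. cnj (trunc L x l) * z l) = (\<lambda>l. if l \<in> {..<L} then cnj (x l) * z l else 0)"
      by (auto simp: trunc_def)
    then have "l2inner (trunc L x) z = (\<Sum>l<L. cnj (x l) * z l)"
      unfolding l2inner_def using sums_If_finite_set[of "{..<L}" "\<lambda>l. cnj (x l) * z l"]
      by (simp add: sums_iff)
    then show ?thesis
      using True by (simp add: rank1_def eps_def sum_distrib_right mult.assoc)
  qed (simp add: rank1_def eps_def)
qed

lemma rank1_eq_zero_iff: "x \<in> ell2 \<Longrightarrow> rank1 n x = (\<lambda>_ _. 0) \<longleftrightarrow> x = (\<lambda>_. 0)"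
proof
  assume x: "x \<in> ell2" and "rank1 n x = (\<lambda>_ _. 0)"
  then have "cnj (x j) = 0" for j
    using fun_cong[OF rank1_basis_e[OF x, of n j], of n] by (simp add: basis_e_def)
  then show "x = (\<lambda>_. 0)" by auto
qed (auto simp: rank1_def l2inner_def fun_eq_iff)

lemma hs_inner_rank1:
  assumes y: "y \<in> ell2" and \<sigma>: "\<sigma> \<in> S2"
  shows "hs_inner (rank1 n y) \<sigma> = \<sigma> y n"
proof -
  have "(\<lambda>l. l2inner (rank1 n y (basis_e l)) (\<sigma> (basis_e l))) = (\<lambda>l. y l * \<sigma> (basis_e l) n)"
    by (simp add: rank1_basis_e[OF y] l2inner_scaled_basis_e)
  then show ?thesis
    unfolding hs_inner_def using bounded_op_expansion[OF S2_bounded_op[OF \<sigma>] y]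
    by (simp add: sums_iff)
qed

lemma bounded_S2_rank1_trunc:
  assumes A: "bounded_S2 A"
  shows "A (rank1 m (trunc L x)) y n = (\<Sum>l<L. cnj (x l) * A (eps m l) y n)"
  unfolding rank1_trunc by (simp add: bounded_S2_sum_arg[OF A _ eps_S2])

lemma bounded_S2_rank1_sums:
  assumes A: "bounded_S2 A" and x: "x \<in> ell2" and y: "y \<in> ell2"
  shows "(\<lambda>l. cnj (x l) * A (eps m l) y n) sums A (rank1 m x) y n"
proof -
  obtain C where C: "\<And>\<eta>. \<eta> \<in> S2 \<Longrightarrow> hs_norm (A \<eta>) \<le> C * hs_norm \<eta>"
    using bounded_S2_bound[OF A] by blast
  let ?d = "\<lambda>L. (\<lambda>k. trunc L x k - x k)"
  have d: "?d L \<in> ell2" for L by (rule ell2_diff[OF trunc_in_ell2 x])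
  have diff: "A (rank1 m (trunc L x)) y n - A (rank1 m x) y n = A (rank1 m (?d L)) y n" for L
    by (simp add: rank1_diff[OF trunc_in_ell2 x, symmetric]
        bounded_S2_diff_arg[OF A rank1_S2(1)[OF trunc_in_ell2] rank1_S2(1)[OF x]])
  have "norm (A (rank1 m (?d L)) y n) \<le> l2norm y * C * l2norm (?d L)" for L
  proof -
    have "norm (A (rank1 m (?d L)) y n) \<le> l2norm y * hs_norm (A (rank1 m (?d L)))"
      by (intro norm_apply_le_hs_norm bounded_S2_S2[OF A] rank1_S2(1) d y)
    also have "\<dots> \<le> l2norm y * (C * l2norm (?d L))"
      using C[OF rank1_S2(1)[OF d]]
      by (intro mult_left_mono l2norm_nonneg y) (simp add: rank1_S2(2)[OF d])
    finally show ?thesis by (simp add: mult.assoc)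
  qed
  then have "(\<lambda>L. A (rank1 m (trunc L x)) y n - A (rank1 m x) y n) \<longlonglongrightarrow> 0"
    unfolding diff
    by (intro Lim_null_comparison[OF always_eventually
          tendsto_mult_right_zero[OF tail_tendsto_zero[OF x], of "l2norm y * C"]]) blast
  then show ?thesis
    unfolding sums_def by (simp add: LIM_zero_iff flip: bounded_S2_rank1_trunc[OF A])
qed

section \<open>The coefficient operators\<close>

definition kernel_op :: "sop \<Rightarrow> nat \<Rightarrow> nat \<Rightarrow> hop" where
  "kernel_op A n m y = (if y \<in> ell2 then (\<lambda>k. A (eps m k) y n) else (\<lambda>_. 0))"

lemma l2inner_kernel_op:
  assumes A: "bounded_S2 A" and x: "x \<in> ell2" and y: "y \<in> ell2"
  shows "l2inner x (kernel_op A n m y) = A (rank1 m x) y n"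
  using bounded_S2_rank1_sums[OF A x y, of m n] y
  unfolding l2inner_def kernel_op_def by (simp add: sums_iff)

(* With x the truncation of kernel_op A n m y to its first K entries,
   ||x||^2 = <x, kernel_op A n m y> = A |e_m><x| y n <= ||y|| C ||x||. *)
lemma kernel_op_partial_sum_bound:
  assumes A: "bounded_S2 A"
    and C: "C \<ge> 0" "\<And>\<eta>. \<eta> \<in> S2 \<Longrightarrow> hs_norm (A \<eta>) \<le> C * hs_norm \<eta>"
    and y: "y \<in> ell2"
  shows "(\<Sum>k<K. (cmod (A (eps m k) y n))\<^sup>2) \<le> (C * l2norm y)\<^sup>2"
proof -
  define s where "s k = A (eps m k) y n" for k
  define X where "X = (\<Sum>k<K. (cmod (s k))\<^sup>2)"
  have X0: "0 \<le> X" by (simp add: X_def sum_nonneg)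
  have "cnj z * z = complex_of_real ((cmod z)\<^sup>2)" for z
    using complex_norm_square[of z] by (simp only: mult.commute)
  then have "complex_of_real X = (\<Sum>l<K. cnj (s l) * s l)"
    by (simp only: X_def of_real_sum)
  also have "\<dots> = A (rank1 m (trunc K s)) y n"
    by (simp add: bounded_S2_rank1_trunc[OF A] s_def)
  finally have "X = cmod (A (rank1 m (trunc K s)) y n)"
    using X0 by (metis norm_of_real abs_of_nonneg)
  also have "\<dots> \<le> l2norm y * hs_norm (A (rank1 m (trunc K s)))"
    by (intro norm_apply_le_hs_norm bounded_S2_S2[OF A] rank1_S2(1) trunc_in_ell2 y)
  also have "\<dots> \<le> l2norm y * (C * sqrt X)"
    using C(2)[OF rank1_S2(1)[OF trunc_in_ell2, of m K s]]
    by (intro mult_left_mono l2norm_nonneg y) (simp add: rank1_S2(2) l2norm_trunc X_def)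
  finally have sq: "sqrt X * sqrt X \<le> (C * l2norm y) * sqrt X"
    using X0 by (simp add: ac_simps)
  have "sqrt X \<le> C * l2norm y"
  proof (cases "X = 0")
    case True
    then show ?thesis using C(1) l2norm_nonneg[OF y] by simp
  next
    case False
    then show ?thesis using X0 by (intro mult_right_le_imp_le[OF sq]) simp
  qed
  then show ?thesis
    using X0 sqrt_le_D by (simp add: X_def s_def)
qed

lemma kernel_op_bound:
  assumes A: "bounded_S2 A"
    and C: "C \<ge> 0" "\<And>\<eta>. \<eta> \<in> S2 \<Longrightarrow> hs_norm (A \<eta>) \<le> C * hs_norm \<eta>"
    and y: "y \<in> ell2"
  shows "kernel_op A n m y \<in> ell2" and "l2norm (kernel_op A n m y) \<le> C * l2norm y"
proof -
  note partial = kernel_op_partial_sum_bound[where m = m and n = n, OF A C y]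
  have s_eq: "kernel_op A n m y = (\<lambda>k. A (eps m k) y n)"
    using y by (simp add: kernel_op_def)
  have sm: "summable (\<lambda>k. (cmod (A (eps m k) y n))\<^sup>2)"
    by (rule summableI_nonneg_bounded[OF _ partial]) simp
  then show "kernel_op A n m y \<in> ell2"
    by (simp add: s_eq mem_ell2)
  have "l2norm (kernel_op A n m y) \<le> sqrt ((C * l2norm y)\<^sup>2)"
    unfolding s_eq l2norm_def[of "\<lambda>k. A (eps m k) y n"]
    by (intro real_sqrt_le_mono suminf_le_const[OF sm partial])
  then show "l2norm (kernel_op A n m y) \<le> C * l2norm y"
    using C(1) l2norm_nonneg[OF y] by simp
qed

lemma kernel_op_bounded_op:
  assumes A: "bounded_S2 A"
  shows "bounded_op (kernel_op A n m)"
proof -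
  obtain C where C: "C \<ge> 0" "\<And>\<eta>. \<eta> \<in> S2 \<Longrightarrow> hs_norm (A \<eta>) \<le> C * hs_norm \<eta>"
    using bounded_S2_bound[OF A] by blast
  have E: "bounded_op (A (eps m k))" for k
    by (rule S2_bounded_op[OF bounded_S2_S2[OF A eps_S2]])
  show ?thesis
    unfolding bounded_op_def
  proof (intro conjI ballI allI impI exI)
    fix x assume "x \<notin> ell2"
    then show "kernel_op A n m x = (\<lambda>_. 0)" by (simp add: kernel_op_def)
  next
    fix x show "kernel_op A n m x \<in> ell2"
      using kernel_op_bound(1)[OF A C] by (cases "x \<in> ell2") (simp_all add: kernel_op_def)
  next
    fix x y assume "x \<in> ell2" "y \<in> ell2"
    then show "kernel_op A n m (\<lambda>k. x k + y k) = (\<lambda>k. kernel_op A n m x k + kernel_op A n m y k)"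
      using bounded_op_lincomb_arg[OF E, where x=x and y=y and a=1 and b=1]
      by (simp add: kernel_op_def ell2_add)
  next
    fix x c assume "x \<in> ell2"
    then show "kernel_op A n m (\<lambda>k. c * x k) = (\<lambda>k. c * kernel_op A n m x k)"
      using bounded_op_lincomb_arg[OF E, where x=x and y=x and a=c and b=0]
      by (simp add: kernel_op_def ell2_scale(1))
  next
    fix x assume "x \<in> ell2"
    then show "l2norm (kernel_op A n m x) \<le> C * l2norm x" using kernel_op_bound(2)[OF A C] by blast
  qed
qed

lemma l2inner_kernel_op_hs_inner:
  assumes A: "bounded_S2 A" and x: "x \<in> ell2" and y: "y \<in> ell2"
  shows "l2inner x (kernel_op A n m y) = hs_inner (rank1 n y) (A (rank1 m x))"
  by (simp add: l2inner_kernel_op[OF A x y]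
      hs_inner_rank1[OF y bounded_S2_S2[OF A rank1_S2(1)[OF x]]])

lemma kernel_op_adjoint:
  assumes A: "bounded_S2 A" and N: "nonneg_S2 A" and x: "x \<in> ell2" and y: "y \<in> ell2"
  shows "l2inner x (kernel_op A n m y) = l2inner (kernel_op A m n x) y"
proof -
  have "l2inner (kernel_op A m n x) y = cnj (l2inner y (kernel_op A m n x))"
    by (intro l2inner_cnj_commute y bounded_op_in_ell2[OF kernel_op_bounded_op[OF A]])
  also have "\<dots> = cnj (hs_inner (rank1 m x) (A (rank1 n y)))"
    by (simp add: l2inner_kernel_op_hs_inner[OF A y x])
  also have "\<dots> = hs_inner (rank1 n y) (A (rank1 m x))"
    by (simp add: nonneg_S2_hermitian[OF A N rank1_S2(1)[OF y] rank1_S2(1)[OF x]])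
  finally show ?thesis by (simp add: l2inner_kernel_op_hs_inner[OF A x y])
qed

definition coeff_op :: "sop \<Rightarrow> nat \<Rightarrow> nat \<Rightarrow> hop" where
  "coeff_op A n m y k = (1 - \<i>) / 2 * kernel_op A n m y k + (1 + \<i>) / 2 * kernel_op A m n y k"

lemma coeff_op_bounded_op: "bounded_S2 A \<Longrightarrow> bounded_op (coeff_op A n m)"
  unfolding coeff_op_def[abs_def] by (intro bounded_op_lincomb kernel_op_bounded_op)

lemma coeff_op_selfadjoint:
  assumes A: "bounded_S2 A" and N: "nonneg_S2 A"
  shows "selfadjoint_op (coeff_op A n m)"
  unfolding selfadjoint_op_def
proof (intro ballI)
  fix x y assume x: "x \<in> ell2" and y: "y \<in> ell2"
  have b: "kernel_op A i j z \<in> ell2" for i j z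
    by (rule bounded_op_in_ell2[OF kernel_op_bounded_op[OF A]])
  have cnj_coeffs: "cnj ((1 - \<i>) / 2) = (1 + \<i>) / 2" "cnj ((1 + \<i>) / 2) = (1 - \<i>) / 2"
    by (simp_all add: complex_eq_iff)
  have "l2inner x (coeff_op A n m y)
      = (1 - \<i>) / 2 * l2inner (kernel_op A m n x) y + (1 + \<i>) / 2 * l2inner (kernel_op A n m x) y"
    unfolding coeff_op_def[abs_def] l2inner_lincomb_right[OF x b b] kernel_op_adjoint[OF A N x y] ..
  also have "\<dots> = l2inner (coeff_op A n m x) y"
    unfolding coeff_op_def[abs_def] l2inner_lincomb_left[OF y b b] cnj_coeffs by (rule add.commute)
  finally show "l2inner x (coeff_op A n m y) = l2inner (coeff_op A n m x) y" .
qed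

lemma coeff_op_diag: "coeff_op A n n = kernel_op A n n"
proof -
  have "(1 - \<i>) / 2 * z + (1 + \<i>) / 2 * z = z" for z :: complex
    by (simp add: complex_eq_iff field_simps)
  then show ?thesis by (simp add: coeff_op_def[abs_def] fun_eq_iff)
qed

lemma coeff_op_combination:
  "(1 + \<i>) / 2 * coeff_op A n m y k + (1 - \<i>) / 2 * coeff_op A m n y k = kernel_op A n m y k"
  by (simp add: coeff_op_def complex_eq_iff field_simps)

lemma l2inner_coeff_op_diag:
  "bounded_S2 A \<Longrightarrow> x \<in> ell2 \<Longrightarrow> l2inner x (coeff_op A n n x) = hs_inner (rank1 n x) (A (rank1 n x))"
  by (simp add: coeff_op_diag l2inner_kernel_op_hs_inner)

lemma glb_S2_le_glb_op_coeff_op_diag: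
  assumes A: "bounded_S2 A" and N: "nonneg_S2 A"
  shows "glb_S2 A \<le> glb_op (coeff_op A n n)"
  unfolding glb_op_def
proof (rule cInf_greatest)
  show "(\<lambda>x. Re (l2inner x (coeff_op A n n x))) ` {x \<in> ell2. l2norm x = 1} \<noteq> {}"
    using basis_e_in_ell2 l2norm_basis_e by blast
next
  fix v assume "v \<in> (\<lambda>x. Re (l2inner x (coeff_op A n n x))) ` {x \<in> ell2. l2norm x = 1}"
  then obtain x where x: "x \<in> ell2" "l2norm x = 1" and v: "v = Re (l2inner x (coeff_op A n n x))"
    by blast
  have "v \<in> (\<lambda>\<eta>. Re (hs_inner \<eta> (A \<eta>))) ` {\<eta> \<in> S2. hs_norm \<eta> = 1}"
    using rank1_S2[OF x(1), of n] x(2) by (auto simp: v l2inner_coeff_op_diag[OF A x(1)])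
  moreover have "bdd_below ((\<lambda>\<eta>. Re (hs_inner \<eta> (A \<eta>))) ` {\<eta> \<in> S2. hs_norm \<eta> = 1})"
    using N unfolding nonneg_S2_def bdd_below_def by (intro exI[of _ 0]) auto
  ultimately show "glb_S2 A \<le> v"
    unfolding glb_S2_def by (rule cInf_lower)
qed

section \<open>Convergence of the expansion\<close>

lemma eps_apply: "w \<in> ell2 \<Longrightarrow> eps n m w k = w m * basis_e n k"
  by (simp add: eps_def)

lemma sum_basis_e_apply: "(\<Sum>n<N. f n * basis_e n k) = (if k < N then f k else 0)"
  using fun_cong[OF trunc_eq_sum_basis_e[of N f], of k] by (simp add: trunc_def)

lemma epshat_coeff_op_sum:
  assumes A: "bounded_S2 A" and \<eta>: "\<eta> \<in> S2"
  shows "(\<Sum>n<N. \<Sum>m<N. epshat n m (\<eta> (coeff_op A n m z)) k) =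
         (if k < N then (\<Sum>m<N. \<eta> (kernel_op A k m z) m) else 0)"
proof -
  have B: "bounded_op \<eta>" by (rule S2_bounded_op[OF \<eta>])
  define W where "W n m = \<eta> (coeff_op A n m z)" for n m
  define c1 where "c1 = (1 + \<i>) / 2"
  define c2 where "c2 = (1 - \<i>) / 2"
  have W: "W n m \<in> ell2" for n m unfolding W_def by (rule bounded_op_in_ell2[OF B])
  have "(\<Sum>n<N. \<Sum>m<N. epshat n m (\<eta> (coeff_op A n m z)) k) =
        (\<Sum>n<N. \<Sum>m<N. c1 * (W n m m * basis_e n k)) + (\<Sum>n<N. \<Sum>m<N. c2 * (W n m n * basis_e m k))"
    unfolding epshat_def W_def[symmetric] c1_def c2_def by (simp add: eps_apply W sum.distrib)
  also have "(\<Sum>n<N. \<Sum>m<N. c1 * (W n m m * basis_e n k))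
      = (\<Sum>n<N. (\<Sum>m<N. c1 * W n m m) * basis_e n k)"
    by (simp add: sum_distrib_right mult.assoc)
  also have "(\<Sum>n<N. \<Sum>m<N. c2 * (W n m n * basis_e m k))
      = (\<Sum>m<N. (\<Sum>n<N. c2 * W n m n) * basis_e m k)"
    by (subst sum.swap) (simp add: sum_distrib_right mult.assoc)
  finally have "(\<Sum>n<N. \<Sum>m<N. epshat n m (\<eta> (coeff_op A n m z)) k) =
      (if k < N then (\<Sum>m<N. c1 * W k m m + c2 * W m k m) else 0)"
    by (simp add: sum_basis_e_apply sum.distrib)
  moreover have "c1 * W k m m + c2 * W m k m = \<eta> (kernel_op A k m z) m" for m
  proof -
    have "kernel_op A k m z = (\<lambda>l. c1 * coeff_op A k m z l + c2 * coeff_op A m k z l)"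
      unfolding c1_def c2_def coeff_op_combination ..
    then show ?thesis
      unfolding W_def
      by (simp add: bounded_op_lincomb_arg[OF B] bounded_op_in_ell2[OF coeff_op_bounded_op[OF A]])
  qed
  ultimately show ?thesis by simp
qed

definition adj_basis :: "hop \<Rightarrow> nat \<Rightarrow> (nat \<Rightarrow> complex)" where
  "adj_basis \<eta> m = (\<lambda>l. cnj (\<eta> (basis_e l) m))"

lemma adj_basis_in_ell2:
  assumes \<eta>: "\<eta> \<in> S2"
  shows "adj_basis \<eta> m \<in> ell2"
proof -
  have le: "(cmod (adj_basis \<eta> m l))\<^sup>2 \<le> (l2norm (\<eta> (basis_e l)))\<^sup>2" for l
    unfolding adj_basis_def by (simp add: power_mono norm_le_l2norm S2_column_in_ell2[OF \<eta>])
  show ?thesis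
    unfolding mem_ell2 by (rule summable_comparison_test'[OF S2_summable[OF \<eta>]]) (simp add: le)
qed

lemma l2inner_adj_basis:
  assumes \<eta>: "\<eta> \<in> S2" and v: "v \<in> ell2"
  shows "l2inner (adj_basis \<eta> m) v = \<eta> v m"
  using bounded_op_expansion[OF S2_bounded_op[OF \<eta>] v, of m]
  by (simp add: l2inner_def adj_basis_def sums_iff mult.commute)

lemma trunc_op_eq_sum_rank1:
  assumes \<eta>: "\<eta> \<in> S2"
  shows "trunc_op N \<eta> = (\<lambda>z k. \<Sum>m<N. 1 * rank1 m (adj_basis \<eta> m) z k)"
proof (intro ext)
  fix z k
  show "trunc_op N \<eta> z k = (\<Sum>m<N. 1 * rank1 m (adj_basis \<eta> m) z k)"
    using l2inner_adj_basis[OF \<eta>] bounded_op_outside[OF S2_bounded_op[OF \<eta>]]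
    by (cases "z \<in> ell2") (simp_all add: trunc_op_def trunc_def rank1_def sum_basis_e_apply)
qed

lemma epshat_coeff_op_sum_eq_trunc_op:
  assumes A: "bounded_S2 A" and \<eta>: "\<eta> \<in> S2" and z: "z \<in> ell2"
  shows "(\<Sum>n<N. \<Sum>m<N. epshat n m (\<eta> (coeff_op A n m z)) k) = trunc_op N (A (trunc_op N \<eta>)) z k"
proof -
  have rows: "\<eta> (kernel_op A k m z) m = A (rank1 m (adj_basis \<eta> m)) z k" for m
    using l2inner_adj_basis[OF \<eta> bounded_op_in_ell2[OF kernel_op_bounded_op[OF A]]]
      l2inner_kernel_op[OF A adj_basis_in_ell2[OF \<eta>] z] by metis
  have "A (trunc_op N \<eta>) = (\<lambda>z k. \<Sum>m<N. 1 * A (rank1 m (adj_basis \<eta> m)) z k)"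
    unfolding trunc_op_eq_sum_rank1[OF \<eta>]
    by (rule bounded_S2_sum_arg[OF A]) (simp_all add: rank1_S2 adj_basis_in_ell2 \<eta>)
  then show ?thesis
    by (simp add: epshat_coeff_op_sum[OF A \<eta>] rows trunc_op_def trunc_def)
qed

lemma hs_norm_epshat_coeff_op_sum_diff:
  assumes A: "bounded_S2 A" and \<eta>: "\<eta> \<in> S2"
  shows "hs_norm (\<lambda>x k. (\<Sum>n<N. \<Sum>m<N. epshat n m (\<eta> (coeff_op A n m x)) k) - A \<eta> x k)
    = hs_norm (\<lambda>x k. trunc_op N (A (\<lambda>x k. trunc_op N \<eta> x k - \<eta> x k)) x k
                     + (trunc_op N (A \<eta>) x k - A \<eta> x k))"
proof -
  have A_diff: "A (\<lambda>x k. trunc_op N \<eta> x k - \<eta> x k) = (\<lambda>x k. A (trunc_op N \<eta>) x k - A \<eta> x k)"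
    by (rule bounded_S2_diff_arg[OF A trunc_op_S2(1)[OF \<eta>] \<eta>])
  have "(\<lambda>k. (\<Sum>n<N. \<Sum>m<N. epshat n m (\<eta> (coeff_op A n m (basis_e j))) k) - A \<eta> (basis_e j) k)
    = (\<lambda>k. trunc_op N (A (\<lambda>x k. trunc_op N \<eta> x k - \<eta> x k)) (basis_e j) k
            + (trunc_op N (A \<eta>) (basis_e j) k - A \<eta> (basis_e j) k))" for j
    unfolding A_diff
    by (simp add: epshat_coeff_op_sum_eq_trunc_op[OF A \<eta>] trunc_op_def trunc_def fun_eq_iff)
  then show ?thesis
    unfolding hs_norm_def by simp
qed

lemma epshat_coeff_op_sum_tendsto:
  assumes A: "bounded_S2 A" and \<eta>: "\<eta> \<in> S2"
  shows "(\<lambda>N. hs_norm (\<lambda>x k. (\<Sum>n<N. \<Sum>m<N. epshat n m (\<eta> (coeff_op A n m x)) k) - A \<eta> x k))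
    \<longlonglongrightarrow> 0"
proof -
  obtain C where C: "\<And>\<eta>. \<eta> \<in> S2 \<Longrightarrow> hs_norm (A \<eta>) \<le> C * hs_norm \<eta>"
    using bounded_S2_bound[OF A] by blast
  have A\<eta>: "A \<eta> \<in> S2" by (rule bounded_S2_S2[OF A \<eta>])
  let ?D = "\<lambda>N. (\<lambda>x k. trunc_op N \<eta> x k - \<eta> x k)"
  let ?E = "\<lambda>N. (\<lambda>x k. trunc_op N (A \<eta>) x k - A \<eta> x k)"
  let ?R = "\<lambda>N. (\<lambda>x k. trunc_op N (A (?D N)) x k + ?E N x k)"
  have D: "?D N \<in> S2" and E: "?E N \<in> S2" for N
    by (intro S2_diff trunc_op_S2(1) \<eta> A\<eta>)+
  have AD: "A (?D N) \<in> S2" for N by (rule bounded_S2_S2[OF A D])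
  have bound: "hs_norm (?R N) \<le> C * hs_norm (?D N) + hs_norm (?E N)" for N
  proof -
    have "hs_norm (?R N) \<le> hs_norm (trunc_op N (A (?D N))) + hs_norm (?E N)"
      by (intro hs_norm_add_le trunc_op_S2(1) AD E)
    also have "hs_norm (trunc_op N (A (?D N))) \<le> C * hs_norm (?D N)"
      using trunc_op_S2(2)[OF AD, of N N] C[OF D, of N] by linarith
    finally show ?thesis by simp
  qed
  have "(\<lambda>N. C * hs_norm (?D N) + hs_norm (?E N)) \<longlonglongrightarrow> C * 0 + 0"
    by (intro tendsto_add tendsto_mult tendsto_const trunc_op_tendsto \<eta> A\<eta>)
  then have lim: "(\<lambda>N. C * hs_norm (?D N) + hs_norm (?E N)) \<longlonglongrightarrow> 0" by simp
  show ?thesis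
    unfolding hs_norm_epshat_coeff_op_sum_diff[OF A \<eta>]
  proof (rule tendsto_sandwich[OF _ _ tendsto_const lim])
    show "\<forall>\<^sub>F N in sequentially. 0 \<le> hs_norm (?R N)"
      by (intro always_eventually allI hs_norm_nonneg S2_add trunc_op_S2(1) AD E)
    show "\<forall>\<^sub>F N in sequentially. hs_norm (?R N) \<le> C * hs_norm (?D N) + hs_norm (?E N)"
      by (intro always_eventually allI bound)
  qed
qed

theorem proposition3p14:
  fixes A :: sop
  assumes "bounded_S2 A" and "nonneg_S2 A"
  shows "\<exists>a :: nat \<Rightarrow> nat \<Rightarrow> hop.
           (\<forall>n m. bounded_op (a n m) \<and> selfadjoint_op (a n m)) \<and>
           (\<forall>\<eta>\<in>S2. (\<lambda>N. hs_norm (\<lambda>x k. (\<Sum>n<N. \<Sum>m<N. epshat n m (\<eta> (a n m x)) k) - A \<eta> x k))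
                        \<longlonglongrightarrow> 0) \<and>
           (\<forall>n. nonneg_op (a n n)) \<and>
           (positive_S2 A \<longrightarrow> (\<forall>n. positive_op (a n n))) \<and>
           (posdef_S2 A \<longrightarrow> (\<forall>n. posdef_op (a n n))) \<and>
           (\<forall>n. glb_op (a n n) \<ge> glb_S2 A)"
proof (intro exI[of _ "coeff_op A"] conjI allI ballI impI)
  fix n m
  show "bounded_op (coeff_op A n m)" by (rule coeff_op_bounded_op[OF assms(1)])
  show "selfadjoint_op (coeff_op A n m)" by (rule coeff_op_selfadjoint[OF assms])
next
  fix \<eta> assume "\<eta> \<in> S2"
  then show "(\<lambda>N. hs_norm (\<lambda>x k. (\<Sum>n<N. \<Sum>m<N. epshat n m (\<eta> (coeff_op A n m x)) k) - A \<eta> x k)) \<longlonglongrightarrow> 0"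
    by (rule epshat_coeff_op_sum_tendsto[OF assms(1)])
next
  fix n
  show "nonneg_op (coeff_op A n n)"
    using assms rank1_S2(1) by (simp add: nonneg_op_def nonneg_S2_def l2inner_coeff_op_diag)
  show "glb_S2 A \<le> glb_op (coeff_op A n n)"
    by (rule glb_S2_le_glb_op_coeff_op_diag[OF assms])
  show "posdef_S2 A \<Longrightarrow> posdef_op (coeff_op A n n)"
    using glb_S2_le_glb_op_coeff_op_diag[OF assms, of n] by (simp add: posdef_S2_def posdef_op_def)
  show "positive_S2 A \<Longrightarrow> positive_op (coeff_op A n n)"
    using assms(1) rank1_S2(1) rank1_eq_zero_iff
    by (simp add: positive_op_def positive_S2_def l2inner_coeff_op_diag)
qed

end
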